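(* Let $0<\Gamma_0\le1$ and let $\tau\subset\mathbb R^m$ be a $\Gamma_0$-flake. Then for every vertex $p\in\tau$, $$D(p,\tau)<\frac{2L(\tau)^2\,\Gamma_0}{\ell(\tau)}.$$
   Context: A simplex is a nonempty finite subset $\sigma\subset\mathbb R^m$ (vertices need not be affinely independent); $\dim\sigma=|\sigma|-1$; faces are nonempty subsets. For $p\in\sigma$, $\sigma_p=\sigma\setminus\{p\}$. $L(\sigma)$ and $\ell(\sigma)$ are the largest and smallest distances between distinct vertices (both $0$ for a $0$-simplex). The altitude of $p$ in $\sigma$ is $D(p,\sigma)=d(p,\mathrm{aff}(\sigma_p))$. The thickness of a $j$-simplex is $\Upsilon(\sigma)=1$ if $j=0$ and $\min_{p\in\sigma}D(p,\sigma)/(jL(\sigma))$ otherwise. $\sigma$ is $\Gamma_0$-good if every $j$-dimensional face $\sigma^j\subseteq\sigma$ ($0\le j\le\dim\sigma$) satisfies $\Upsilon(\sigma^j)\ge\Gamma_0^j$; it is $\Gamma_0$-bad otherwise. A $\Gamma_0$-flake is a $\Gamma_0$-bad simplex all of whose proper faces are $\Gamma_0$-good. *)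

theory Defs
  imports "HOL-Analysis.Analysis"
begin

text \<open>A simplex is a nonempty finite set of points (vertices need not be affinely independent).
  Points live in an arbitrary Euclidean space (R^m).\<close>

definition is_simplex :: "'a::euclidean_space set \<Rightarrow> bool" where
  "is_simplex \<sigma> \<longleftrightarrow> finite \<sigma> \<and> \<sigma> \<noteq> {}"

definition sdim :: "'a::euclidean_space set \<Rightarrow> nat" where
  "sdim \<sigma> = card \<sigma> - 1"

definition Lmax :: "'a::euclidean_space set \<Rightarrow> real" where
  "Lmax \<sigma> = (if card \<sigma> \<le> 1 then 0
     else Max {dist p q | p q. p \<in> \<sigma> \<and> q \<in> \<sigma> \<and> p \<noteq> q})"

definition lmin :: "'a::euclidean_space set \<Rightarrow> real" where
  "lmin \<sigma> = (if card \<sigma> \<le> 1 then 0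
     else Min {dist p q | p q. p \<in> \<sigma> \<and> q \<in> \<sigma> \<and> p \<noteq> q})"

definition altitude :: "'a::euclidean_space \<Rightarrow> 'a set \<Rightarrow> real" where
  "altitude p \<sigma> = infdist p (affine hull (\<sigma> - {p}))"

definition thickness :: "'a::euclidean_space set \<Rightarrow> real" where
  "thickness \<sigma> = (if sdim \<sigma> = 0 then 1
     else Min ((\<lambda>p. altitude p \<sigma>) ` \<sigma>) / (real (sdim \<sigma>) * Lmax \<sigma>))"

definition good :: "real \<Rightarrow> 'a::euclidean_space set \<Rightarrow> bool" where
  "good \<Gamma>\<^sub>0 \<sigma> \<longleftrightarrow> (\<forall>\<tau>. \<tau> \<subseteq> \<sigma> \<and> \<tau> \<noteq> {} \<longrightarrow> thickness \<tau> \<ge> \<Gamma>\<^sub>0 ^ sdim \<tau>)"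

definition flake :: "real \<Rightarrow> 'a::euclidean_space set \<Rightarrow> bool" where
  "flake \<Gamma>\<^sub>0 \<sigma> \<longleftrightarrow> is_simplex \<sigma> \<and> \<not> good \<Gamma>\<^sub>0 \<sigma> \<and>
     (\<forall>\<tau>. \<tau> \<subset> \<sigma> \<and> \<tau> \<noteq> {} \<longrightarrow> good \<Gamma>\<^sub>0 \<tau>)"

end

theory Submission
  imports Defs
begin

text \<open>Let \<open>q\<close> be a vertex of smallest altitude in the \<open>j\<close>-dimensional flake \<open>\<tau>\<close>.
  Since \<open>\<tau>\<close> itself is thin, \<open>D(q,\<tau>) < j \<Gamma>\<^sub>0^j L\<close>. For another vertex \<open>r\<close> and a third vertex
  \<open>a\<close>, the two faces through the common ridge \<open>\<tau> - {r, q}\<close> give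
  \<open>D(r,\<tau>) D(q,\<tau>\<^sub>r) \<le> D(q,\<tau>) |r - a|\<close>, while the good facet \<open>\<tau>\<^sub>r\<close> has
  \<open>D(q,\<tau>\<^sub>r) \<ge> (j-1) \<Gamma>\<^sub>0^(j-1) L(\<tau>\<^sub>r) \<ge> (j-1) \<Gamma>\<^sub>0^(j-1) \<ell>\<close>. Dividing,
  \<open>D(r,\<tau>) < j/(j-1) \<Gamma>\<^sub>0 L\<^sup>2/\<ell> \<le> 2 \<Gamma>\<^sub>0 L\<^sup>2/\<ell>\<close>; the vertex \<open>q\<close> itself has an even smaller altitude.\<close>

lemma norm_le_norm_add_orthogonal:
  fixes u w :: "'a::real_inner"
  assumes "orthogonal u w"
  shows "norm u \<le> norm (u + w)"
proof -
  have "(norm u)\<^sup>2 \<le> (norm (u + w))\<^sup>2"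
    using norm_add_Pythagorean[OF assms] by simp
  then show ?thesis by (rule power2_le_imp_le) simp
qed

text \<open>Squared, the left side is the Gram determinant \<open>|u|\<^sup>2|v|\<^sup>2 - (u\<bullet>v)\<^sup>2\<close>
  and the right side exceeds it by \<open>(s|u|\<^sup>2 - u\<bullet>v)\<^sup>2\<close>.\<close>

lemma norm_line_residual_mult_le:
  fixes u v :: "'a::real_inner"
  shows "norm (u - (inner u v / inner v v) *\<^sub>R v) * norm v \<le> norm (v - s *\<^sub>R u) * norm u"
proof (cases "v = 0")
  case False
  define A B C where "A = inner u u" and "B = inner v v" and "C = inner u v"
  have "B > 0" using False by (simp add: B_def)
  have lhs: "(norm (u - (C / B) *\<^sub>R v) * norm v)\<^sup>2 = A * B - C\<^sup>2"
    unfolding power_mult_distrib power2_norm_eq_inner using \<open>B > 0\<close>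
    by (simp add: A_def B_def C_def inner_diff_left inner_diff_right inner_commute
        field_simps power2_eq_square)
  have rhs: "(norm (v - s *\<^sub>R u) * norm u)\<^sup>2 = A * B - C\<^sup>2 + (s * A - C)\<^sup>2"
    unfolding power_mult_distrib power2_norm_eq_inner
    by (simp add: A_def B_def C_def inner_diff_left inner_diff_right inner_commute
        algebra_simps power2_eq_square)
  have "(norm (u - (C / B) *\<^sub>R v) * norm v)\<^sup>2 \<le> (norm (v - s *\<^sub>R u) * norm u)\<^sup>2"
    unfolding lhs rhs by simp
  then show ?thesis
    unfolding B_def C_def by (rule power2_le_imp_le) simp
qed simp

lemma le_infdist_mult:
  assumes "A \<noteq> {}" and "0 \<le> k" and "\<And>z. z \<in> A \<Longrightarrow> c \<le> dist y z * k"
  shows "c \<le> infdist y A * k"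
proof (cases "k = 0")
  case True
  then show ?thesis using assms by auto
next
  case False
  then have "c / k \<le> infdist y A"
    unfolding infdist_notempty[OF \<open>A \<noteq> {}\<close>] using assms
    by (intro cINF_greatest) (simp_all add: divide_le_eq)
  then show ?thesis using False \<open>0 \<le> k\<close> by (simp add: divide_le_eq)
qed

lemma infdist_translation:
  fixes a x :: "'a::real_normed_vector"
  shows "infdist (a + x) ((\<lambda>y. a + y) ` A) = infdist x A"
  by (cases "A = {}") (simp_all add: infdist_notempty image_image, simp add: infdist_def)

lemma infdist_span_insert_mult_le:
  fixes x y :: "'a::euclidean_space"
  shows "infdist x (span (insert y S)) * infdist y (span S)
           \<le> infdist y (span (insert x S)) * norm x"
proof -
  txt \<open>Only the components \<open>u\<close>, \<open>v\<close> of \<open>x\<close>, \<open>y\<close> orthogonal to \<open>span S\<close> matter.\<close>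
  obtain wx u where wx: "wx \<in> span S" and u: "\<And>w. w \<in> span S \<Longrightarrow> orthogonal u w"
    and x: "x = wx + u"
    using orthogonal_subspace_decomp_exists[of S x] by blast
  obtain wy v where wy: "wy \<in> span S" and v: "\<And>w. w \<in> span S \<Longrightarrow> orthogonal v w"
    and y: "y = wy + v"
    using orthogonal_subspace_decomp_exists[of S y] by blast
  define t where "t = inner u v / inner v v"
  have dist_y_S: "infdist y (span S) \<le> norm v"
    using infdist_le[OF wy, of y] by (simp add: y dist_norm)
  have u_le_x: "norm u \<le> norm x"
    using norm_le_norm_add_orthogonal[of u wx] u[OF wx] by (simp add: x add.commute)
  have "wx - t *\<^sub>R wy + t *\<^sub>R y \<in> span (insert y S)"
    using wx wy by (meson span_add span_diff span_mul span_base insertI1 span_mono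
        subset_insertI subsetD)
  moreover have "x - (wx - t *\<^sub>R wy + t *\<^sub>R y) = u - t *\<^sub>R v"
    by (simp add: x y algebra_simps)
  ultimately have dist_x: "infdist x (span (insert y S)) \<le> norm (u - t *\<^sub>R v)"
    by (metis infdist_le dist_norm)
  have "infdist x (span (insert y S)) * infdist y (span S) \<le> norm (u - t *\<^sub>R v) * norm v"
    using dist_x dist_y_S by (simp add: mult_mono infdist_nonneg)
  also have "\<dots> \<le> infdist y (span (insert x S)) * norm u"
  proof (rule le_infdist_mult)
    fix z assume "z \<in> span (insert x S)"
    then obtain s where s: "z - s *\<^sub>R x \<in> span S"
      using span_breakdown_eq by blast
    have "y - z = (v - s *\<^sub>R u) + (wy - s *\<^sub>R wx - (z - s *\<^sub>R x))"
      by (simp add: x y algebra_simps)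
    moreover have "orthogonal (v - s *\<^sub>R u) (wy - s *\<^sub>R wx - (z - s *\<^sub>R x))"
      using u v wx wy s by (simp add: span_diff span_mul orthogonal_clauses)
    ultimately have "norm (v - s *\<^sub>R u) \<le> dist y z"
      by (metis norm_le_norm_add_orthogonal dist_norm)
    then show "norm (u - t *\<^sub>R v) * norm v \<le> dist y z * norm u"
      using norm_line_residual_mult_le[of u v s] unfolding t_def
      by (meson mult_right_mono norm_ge_zero order_trans)
  qed (use span_0 in auto)
  also have "\<dots> \<le> infdist y (span (insert x S)) * norm x"
    using u_le_x by (simp add: mult_left_mono infdist_nonneg)
  finally show ?thesis .
qed

lemma infdist_affine_hull_insert_mult_le:
  fixes p q a :: "'a::euclidean_space"
  assumes "a \<in> B"
  shows "infdist p (affine hull (insert q B)) * infdist q (affine hull B)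
           \<le> infdist q (affine hull (insert p B)) * dist p a"
proof -
  define B0 where "B0 = (\<lambda>x. -a + x) ` B"
  have hull_insert: "affine hull (insert c B) = (\<lambda>x. a + x) ` span (insert (-a + c) B0)" for c
    using affine_hull_insert_span_gen[of a "insert c B"] assms
    by (simp add: B0_def insert_absorb insert_commute)
  have hull: "affine hull B = (\<lambda>x. a + x) ` span B0"
    using affine_hull_insert_span_gen[of a B] assms by (simp add: B0_def insert_absorb)
  have shift: "infdist c ((\<lambda>x. a + x) ` X) = infdist (-a + c) X" for c X
    using infdist_translation[of a "-a + c" X] by simp
  show ?thesis
    unfolding hull_insert hull shift
    using infdist_span_insert_mult_le[of "-a + p" "-a + q" B0]
    by (simp add: dist_norm)
qed

lemma altitude_nonneg: "0 \<le> altitude p \<sigma>"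
  by (simp add: altitude_def infdist_nonneg)

lemma altitude_mult_le:
  assumes "r \<in> \<tau>" "q \<in> \<tau>" "a \<in> \<tau>" "r \<noteq> q" "a \<noteq> r" "a \<noteq> q"
  shows "altitude r \<tau> * altitude q (\<tau> - {r}) \<le> altitude q \<tau> * dist r a"
proof -
  define B where "B = \<tau> - {r, q}"
  have "\<tau> - {r} = insert q B" "\<tau> - {q} = insert r B" "\<tau> - {r} - {q} = B" "a \<in> B"
    using assms by (auto simp: B_def)
  then show ?thesis
    unfolding altitude_def using infdist_affine_hull_insert_mult_le[of a B r q] by simp
qed

lemma finite_vertex_distances:
  "finite \<sigma> \<Longrightarrow> finite {dist p q |p q. p \<in> \<sigma> \<and> q \<in> \<sigma> \<and> p \<noteq> q}"
  by (rule finite_subset[of _ "(\<lambda>(p, q). dist p q) ` (\<sigma> \<times> \<sigma>)"]) auto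

lemma card_gt_1_if_distinct: "finite \<sigma> \<Longrightarrow> x \<in> \<sigma> \<Longrightarrow> y \<in> \<sigma> \<Longrightarrow> x \<noteq> y \<Longrightarrow> \<not> card \<sigma> \<le> 1"
  using card_le_Suc0_iff_eq by fastforce

lemma dist_le_Lmax:
  assumes "finite \<sigma>" "x \<in> \<sigma>" "y \<in> \<sigma>" "x \<noteq> y"
  shows "dist x y \<le> Lmax \<sigma>"
  unfolding Lmax_def using card_gt_1_if_distinct[OF assms] assms
  by (auto intro: Max_ge[OF finite_vertex_distances[OF assms(1)]])

lemma lmin_le_dist:
  assumes "finite \<sigma>" "x \<in> \<sigma>" "y \<in> \<sigma>" "x \<noteq> y"
  shows "lmin \<sigma> \<le> dist x y"
  unfolding lmin_def using card_gt_1_if_distinct[OF assms] assms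
  by (auto intro: Min_le[OF finite_vertex_distances[OF assms(1)]])

lemma lmin_pos:
  assumes "finite \<sigma>" "x \<in> \<sigma>" "y \<in> \<sigma>" "x \<noteq> y"
  shows "0 < lmin \<sigma>"
proof -
  let ?D = "{dist p q |p q. p \<in> \<sigma> \<and> q \<in> \<sigma> \<and> p \<noteq> q}"
  have "?D \<noteq> {}" using assms by blast
  then have "Min ?D \<in> ?D" using Min_in[OF finite_vertex_distances[OF assms(1)]] by blast
  then show ?thesis
    unfolding lmin_def using card_gt_1_if_distinct[OF assms] by auto
qed

lemma thickness_card_le_2:
  assumes "finite \<sigma>" "\<sigma> \<noteq> {}" "card \<sigma> \<le> 2"
  shows "thickness \<sigma> = 1"
proof (cases "card \<sigma> = 2")
  case True
  then obtain a b where ab: "\<sigma> = {a, b}" "a \<noteq> b" by (meson card_2_iff)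
  have "{dist p q |p q. p \<in> \<sigma> \<and> q \<in> \<sigma> \<and> p \<noteq> q} = {dist a b}"
    using ab by (auto simp: dist_commute)
  then have "Lmax \<sigma> = dist a b" using True by (simp add: Lmax_def)
  moreover have "(\<lambda>p. altitude p \<sigma>) ` \<sigma> = {dist a b}"
    using ab by (auto simp: altitude_def insert_Diff_if dist_commute)
  ultimately show ?thesis
    using True ab by (simp add: thickness_def sdim_def)
next
  case False
  then show ?thesis using assms by (simp add: thickness_def sdim_def)
qed

lemma min_altitude_vertexE:
  assumes "finite \<sigma>" "sdim \<sigma> \<noteq> 0"
  obtains q where "q \<in> \<sigma>" "\<And>r. r \<in> \<sigma> \<Longrightarrow> altitude q \<sigma> \<le> altitude r \<sigma>"
    "thickness \<sigma> = altitude q \<sigma> / (sdim \<sigma> * Lmax \<sigma>)"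
proof -
  let ?A = "(\<lambda>r. altitude r \<sigma>) ` \<sigma>"
  have "\<sigma> \<noteq> {}"
    using assms(2) by (auto simp: sdim_def)
  then have "Min ?A \<in> ?A"
    using assms by (intro Min_in) auto
  then obtain q where "q \<in> \<sigma>" "altitude q \<sigma> = Min ?A"
    by auto
  then show ?thesis
    using that assms by (simp add: thickness_def)
qed

lemma good_altitude_ge:
  assumes "good \<Gamma>\<^sub>0 \<sigma>" "finite \<sigma>" "q \<in> \<sigma>"
  shows "\<Gamma>\<^sub>0 ^ sdim \<sigma> * (sdim \<sigma> * Lmax \<sigma>) \<le> altitude q \<sigma>"
proof (cases "sdim \<sigma> = 0")
  case False
  then obtain x y where xy: "x \<in> \<sigma>" "y \<in> \<sigma>" "x \<noteq> y"
    using assms by (metis One_nat_def card_le_Suc0_iff_eq diff_is_0_eq sdim_def)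
  have L: "0 < Lmax \<sigma>"
    using dist_le_Lmax[OF assms(2) xy] dist_pos_lt[OF xy(3)] by linarith
  obtain m where m: "m \<in> \<sigma>" "altitude m \<sigma> \<le> altitude q \<sigma>"
    and thick: "thickness \<sigma> = altitude m \<sigma> / (sdim \<sigma> * Lmax \<sigma>)"
    using min_altitude_vertexE[OF assms(2) False] assms(3) by metis
  have "\<Gamma>\<^sub>0 ^ sdim \<sigma> \<le> thickness \<sigma>"
    using assms unfolding good_def by blast
  then have "\<Gamma>\<^sub>0 ^ sdim \<sigma> * (sdim \<sigma> * Lmax \<sigma>) \<le> altitude m \<sigma>"
    unfolding thick using L False by (simp add: le_divide_eq)
  then show ?thesis using m by linarith
qed (simp add: altitude_nonneg)

lemma flake_thin:
  assumes "flake \<Gamma>\<^sub>0 \<tau>"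
  shows "thickness \<tau> < \<Gamma>\<^sub>0 ^ sdim \<tau>"
proof -
  obtain \<sigma> where \<sigma>: "\<sigma> \<subseteq> \<tau>" "\<sigma> \<noteq> {}" "thickness \<sigma> < \<Gamma>\<^sub>0 ^ sdim \<sigma>"
    using assms unfolding flake_def good_def by (auto simp: not_le)
  have "\<sigma> = \<tau>"
    using \<sigma> assms unfolding flake_def good_def by (meson order_refl not_le psubsetI)
  then show ?thesis using \<sigma> by simp
qed

lemma flake_card_ge_3:
  assumes "0 < \<Gamma>\<^sub>0" "\<Gamma>\<^sub>0 \<le> 1" "flake \<Gamma>\<^sub>0 \<tau>"
  shows "3 \<le> card \<tau>"
proof (rule ccontr)
  assume "\<not> 3 \<le> card \<tau>"
  then have "thickness \<tau> = 1"
    using assms(3) by (intro thickness_card_le_2) (auto simp: flake_def is_simplex_def)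
  moreover have "\<Gamma>\<^sub>0 ^ sdim \<tau> \<le> 1" using assms by (simp add: power_le_one)
  ultimately show False using flake_thin[OF assms(3)] by simp
qed

lemma altitude_less_if_thin_vertex:
  fixes \<tau> :: "'a::euclidean_space set" and \<Gamma>\<^sub>0 :: real
  assumes "0 < \<Gamma>\<^sub>0" "finite \<tau>" "3 \<le> card \<tau>" "r \<in> \<tau>" "q \<in> \<tau>" "r \<noteq> q"
    and facet_good: "good \<Gamma>\<^sub>0 (\<tau> - {r})"
    and thin: "altitude q \<tau> < sdim \<tau> * \<Gamma>\<^sub>0 ^ sdim \<tau> * Lmax \<tau>"
  shows "altitude r \<tau> < 2 * (Lmax \<tau>)\<^sup>2 * \<Gamma>\<^sub>0 / lmin \<tau>"
proof -
  define j L l where "j = sdim \<tau>" and "L = Lmax \<tau>" and "l = lmin \<tau>"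
  have "card (\<tau> - {r, q}) \<noteq> 0"
    using assms by (simp add: card_Diff_subset)
  then obtain a where a: "a \<in> \<tau>" "a \<noteq> r" "a \<noteq> q"
    by (metis Diff_iff card.empty ex_in_conv insertCI)
  have j: "2 \<le> j" "sdim (\<tau> - {r}) = j - 1"
    using assms by (simp_all add: j_def sdim_def)
  have l: "0 < l" "l \<le> Lmax (\<tau> - {r})"
    using lmin_pos[OF assms(2,5) a(1)] lmin_le_dist[OF assms(2,5) a(1)]
      dist_le_Lmax[of "\<tau> - {r}" q a] assms a by (auto simp: l_def)
  have "0 < L"
    using dist_le_Lmax[OF assms(2,4,5,6)] dist_pos_lt[OF assms(6)] unfolding L_def by linarith
  define c where "c = \<Gamma>\<^sub>0 ^ (j - 1)"
  have "0 < c" using assms(1) by (simp add: c_def)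
  have "c * ((j - 1) * l) \<le> c * ((j - 1) * Lmax (\<tau> - {r}))"
    using l \<open>0 < c\<close> j by (simp add: mult_left_mono)
  also have "\<dots> \<le> altitude q (\<tau> - {r})"
    using good_altitude_ge[OF facet_good] assms j by (simp add: c_def)
  finally have facet: "c * ((j - 1) * l) \<le> altitude q (\<tau> - {r})" .
  have "altitude r \<tau> * (c * ((j - 1) * l)) \<le> altitude r \<tau> * altitude q (\<tau> - {r})"
    using facet by (simp add: mult_left_mono altitude_nonneg)
  also have "\<dots> \<le> altitude q \<tau> * L"
    using altitude_mult_le[OF assms(4,5) a(1) assms(6) a(2,3)]
      dist_le_Lmax[OF assms(2,4) a(1)] a
    by (smt (verit) L_def altitude_nonneg mult_left_mono)
  also have "\<dots> < j * \<Gamma>\<^sub>0 ^ j * L * L"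
    using thin \<open>0 < L\<close> by (simp add: j_def L_def)
  also have "\<dots> = c * (j * \<Gamma>\<^sub>0 * L\<^sup>2)"
    using j by (simp add: c_def power2_eq_square power_eq_if)
  finally have "altitude r \<tau> * ((j - 1) * l) < j * \<Gamma>\<^sub>0 * L\<^sup>2"
    using \<open>0 < c\<close> by (simp add: mult_ac)
  also have "\<dots> \<le> (j - 1) * (2 * \<Gamma>\<^sub>0 * L\<^sup>2)"
  proof -
    have "real j \<le> 2 * real (j - 1)" using j(1) by (simp add: of_nat_diff)
    from mult_right_mono[OF this, of "\<Gamma>\<^sub>0 * L\<^sup>2"] show ?thesis
      using assms(1) by (simp add: mult_ac)
  qed
  finally have "altitude r \<tau> * l < 2 * L\<^sup>2 * \<Gamma>\<^sub>0"
    using j by (simp add: mult_ac)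
  then show ?thesis
    using \<open>0 < l\<close> by (simp add: L_def l_def less_divide_eq)
qed

lemma flake_facet_good:
  assumes "flake \<Gamma>\<^sub>0 \<tau>" "2 \<le> card \<tau>" "r \<in> \<tau>"
  shows "good \<Gamma>\<^sub>0 (\<tau> - {r})"
proof -
  have "card (\<tau> - {r}) \<noteq> 0"
    using assms by (simp add: card_Diff_singleton_if)
  then have "\<tau> - {r} \<noteq> {}" by (metis card.empty)
  moreover have "\<tau> - {r} \<subset> \<tau>" using assms(3) by blast
  ultimately show ?thesis using assms(1) by (simp add: flake_def)
qed

theorem mainTheorem5:
  fixes \<tau> :: "'a::euclidean_space set" and \<Gamma>\<^sub>0 :: real and p :: 'a
  assumes "0 < \<Gamma>\<^sub>0" and "\<Gamma>\<^sub>0 \<le> 1"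
    and "flake \<Gamma>\<^sub>0 \<tau>"
    and "p \<in> \<tau>"
  shows "altitude p \<tau> < 2 * (Lmax \<tau>)\<^sup>2 * \<Gamma>\<^sub>0 / lmin \<tau>"
proof -
  have fin: "finite \<tau>"
    using assms(3) by (simp add: flake_def is_simplex_def)
  have card: "3 \<le> card \<tau>" using flake_card_ge_3[OF assms(1-3)] .
  then have sdim: "sdim \<tau> \<noteq> 0" by (simp add: sdim_def)
  obtain q where q: "q \<in> \<tau>" "\<And>r. r \<in> \<tau> \<Longrightarrow> altitude q \<tau> \<le> altitude r \<tau>"
    and thick: "thickness \<tau> = altitude q \<tau> / (sdim \<tau> * Lmax \<tau>)"
    using min_altitude_vertexE[OF fin sdim] by blast
  have "\<tau> \<noteq> {q}" using card by auto
  then obtain r where r: "r \<in> \<tau>" "r \<noteq> q" using q(1) by blast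
  have "0 < Lmax \<tau>"
    using dist_le_Lmax[OF fin r(1) q(1) r(2)] dist_pos_lt[OF r(2)] by linarith
  with sdim have thin: "altitude q \<tau> < sdim \<tau> * \<Gamma>\<^sub>0 ^ sdim \<tau> * Lmax \<tau>"
    using flake_thin[OF assms(3)] unfolding thick by (simp add: divide_less_eq mult_ac)
  have off_min: "altitude r \<tau> < 2 * (Lmax \<tau>)\<^sup>2 * \<Gamma>\<^sub>0 / lmin \<tau>" if "r \<in> \<tau>" "r \<noteq> q" for r
    using altitude_less_if_thin_vertex[OF assms(1) fin card that(1) q(1) that(2)
        flake_facet_good[OF assms(3) _ that(1)] thin] card by simp
  show ?thesis
    using off_min[OF r] q(2)[OF r(1)] off_min[OF assms(4)] by (cases "p = q") auto
qed

end
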